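(* For every integer $k\geq 1$, in $\mathbb{Q}(t)$, $$\frac{2-t}{t^{\lfloor\log_2 k\rfloor}}\cdot\frac{S_{2k+1}(t)}{B_{2k+1}(t)}=\frac{2-t}{t^{\lfloor\log_2 k\rfloor}}\cdot\frac{S_k(t)}{B_k(t)}+\frac{B_{k+1}(t)-(t-1)(B_k(t)+1)}{B_k(t)B_{2k+1}(t)}.$$
   Context: The Stern polynomials $B_n(t)\in\mathbb{Z}[t]$ are defined by $B_0(t)=0$, $B_1(t)=1$, and for $n\geq 1$: $B_{2n}(t)=tB_n(t)$, $B_{2n+1}(t)=B_n(t)+B_{n+1}(t)$ (and $B_n\neq 0$ for $n\ge1$). The polynomials $S_n(t)$, $n\ge1$, are defined by $S_1(t)=S_2(t)=0$ and, for $k\geq 1$, $S_{2k}(t)=tS_k(t)$, $S_{2k+1}(t)=S_k(t)+S_{k+1}(t)+t^{\lfloor\log_2 k\rfloor}$. *)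

theory Defs
  imports Complex_Main "HOL-Computational_Algebra.Polynomial_Factorial"
begin

function stern :: "nat \<Rightarrow> int poly" where
  "stern n = (if n = 0 then 0 else if n = 1 then 1
              else if even n then [:0, 1:] * stern (n div 2)
              else stern (n div 2) + stern (n div 2 + 1))"
  by pat_completeness auto
termination by (relation "measure id") (auto, presburger+)

text \<open>The polynomials S_n(t), n \<ge> 1 (value at 0 is irrelevant, set to 0).\<close>
function sternS :: "nat \<Rightarrow> int poly" where
  "sternS n = (if n \<le> 2 then 0
              else if even n then [:0, 1:] * sternS (n div 2)
              else sternS (n div 2) + sternS (n div 2 + 1)
                   + [:0, 1:] ^ nat \<lfloor>log 2 (real (n div 2))\<rfloor>)"
  by pat_completeness auto
termination by (relation "measure id") (auto elim!: oddE)

definition toQt :: "int poly \<Rightarrow> rat poly fract" where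
  "toQt p = to_fract (map_poly of_int p)"

end

theory Submission
  imports Defs "HOL-Library.Log_Nat"
begin

(* Proof idea.  Write t for the indeterminate and e(k) = floor(log2 k).  The whole
   theorem rests on a polynomial identity in Z[t], valid for every k >= 1:

     (2 - t) * (S_{k+1} B_k - S_k B_{k+1}) = t^e(k) * (B_{k+1} - B_k + 1 - t).    (KEY)

   It is proved by strong induction on k: for k = 1 it is a direct computation, and
   for k = 2m or k = 2m+1 the recurrences express both sides for k as t times the
   corresponding sides for m (two ring identities, stated separately below).
   Passing to Q(t) through the ring embedding toQt, and using that B_n is nonzero
   (its value at t = 1 is positive), the theorem is obtained from (KEY) by a field
   identity: with B_{2k+1} = B_k + B_{k+1} and S_{2k+1} = S_k + S_{k+1} + t^e(k),
   the difference of the two sides of the claimed equation is (KEY) divided by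
   t^e(k) B_k B_{2k+1}. *)

declare stern.simps [simp del] sternS.simps [simp del]

definition flog2 :: "nat \<Rightarrow> nat" where
  "flog2 n = nat \<lfloor>log 2 (real n)\<rfloor>"

lemma flog2_half:
  assumes "n div 2 \<ge> 1"
  shows "flog2 n = flog2 (n div 2) + 1"
proof -
  have "\<lfloor>log (real (2::nat)) (real n)\<rfloor> = \<lfloor>log (real (2::nat)) (real (n div 2))\<rfloor> + 1"
    using assms by (intro floor_log_div) auto
  moreover have "\<lfloor>log 2 (real (n div 2))\<rfloor> \<ge> 0"
    using assms by auto
  ultimately show ?thesis
    unfolding flog2_def by (simp add: nat_add_distrib)
qed

lemma stern_1: "stern 1 = 1"
  by (subst stern.simps) auto

lemma stern_even: "m \<ge> 1 \<Longrightarrow> stern (2*m) = [:0,1:] * stern m"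
  by (subst stern.simps) auto

lemma stern_odd: "m \<ge> 1 \<Longrightarrow> stern (2*m+1) = stern m + stern (m+1)"
  by (subst stern.simps) auto

lemma sternS_1_2: "sternS 1 = 0" "sternS 2 = 0"
  by (simp_all add: sternS.simps)

lemma sternS_even: "m \<ge> 1 \<Longrightarrow> sternS (2*m) = [:0,1:] * sternS m"
  by (cases "m = 1") (simp_all add: sternS.simps)

lemma sternS_odd:
  "m \<ge> 1 \<Longrightarrow> sternS (2*m+1) = sternS m + sternS (m+1) + [:0,1:] ^ flog2 m"
  by (subst sternS.simps) (auto simp: flog2_def)

text \<open>Induction step of (KEY) for k = 2m, written over an arbitrary commutative ring:
  a, b, s, s' stand for B_m, B_{m+1}, S_m, S_{m+1} and p for t^e(m).\<close>
lemma key_step_even: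
  fixes t a b s s' p :: "'a::comm_ring_1"
  assumes "(2-t) * (s'*a - s*b) = p * (b - a + 1 - t)"
  shows "(2-t) * ((s + s' + p) * (t*a) - (t*s) * (a+b)) = (p*t) * ((a+b) - t*a + 1 - t)"
proof -
  have "(2-t) * ((s + s' + p) * (t*a) - (t*s) * (a+b)) - (p*t) * ((a+b) - t*a + 1 - t)
      = t * ((2-t) * (s'*a - s*b) - p * (b - a + 1 - t))"
    by (simp add: algebra_simps)
  with assms show ?thesis by simp
qed

text \<open>Induction step of (KEY) for k = 2m+1, with the same meaning of the variables.\<close>
lemma key_step_odd:
  fixes t a b s s' p :: "'a::comm_ring_1"
  assumes "(2-t) * (s'*a - s*b) = p * (b - a + 1 - t)"
  shows "(2-t) * ((t*s') * (a+b) - (s + s' + p) * (t*b)) = (p*t) * (t*b - (a+b) + 1 - t)"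
proof -
  have "(2-t) * ((t*s') * (a+b) - (s + s' + p) * (t*b)) - (p*t) * (t*b - (a+b) + 1 - t)
      = t * ((2-t) * (s'*a - s*b) - p * (b - a + 1 - t))"
    by (simp add: algebra_simps)
  with assms show ?thesis by simp
qed

lemma stern_key_identity:
  "k \<ge> 1 \<Longrightarrow> (2 - [:0,1:]) * (sternS (k+1) * stern k - sternS k * stern (k+1))
              = [:0,1:] ^ flog2 k * (stern (k+1) - stern k + 1 - [:0,1:])"
proof (induction k rule: less_induct)
  case (less k)
  show ?case
  proof (cases "k = 1")
    case True
    have "stern 2 = [:0,1:]" "sternS 2 = 0"
      using stern_even[of 1] stern_1 sternS_1_2 by simp_all
    then show ?thesis
      using True stern_1 sternS_1_2 by (simp add: flog2_def numeral_2_eq_2)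
  next
    case False
    define m where "m = k div 2"
    have k_cases: "k = 2*m \<or> k = 2*m+1" and "m \<ge> 1"
      using less.prems False unfolding m_def by presburger+
    have IH: "(2 - [:0,1:]) * (sternS (m+1) * stern m - sternS m * stern (m+1))
              = [:0,1:] ^ flog2 m * (stern (m+1) - stern m + 1 - [:0,1:])"
      using less.IH[of m] \<open>m \<ge> 1\<close> k_cases by auto
    have e: "flog2 k = flog2 m + 1"
      using flog2_half[of k] \<open>m \<ge> 1\<close> unfolding m_def by auto
    from k_cases show ?thesis
    proof
      assume k: "k = 2*m"
      have S: "sternS (k+1) = sternS m + sternS (m+1) + [:0,1:] ^ flog2 m"
        and B: "stern (k+1) = stern m + stern (m+1)"
        using sternS_odd stern_odd \<open>m \<ge> 1\<close> k by simp_all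
      show ?thesis
        unfolding S B e power_add power_one_right unfolding k stern_even[OF \<open>m \<ge> 1\<close>] sternS_even[OF \<open>m \<ge> 1\<close>]
        by (rule key_step_even[OF IH])
    next
      assume k: "k = 2*m+1"
      have S: "sternS (k+1) = [:0,1:] * sternS (m+1)"
        and B: "stern (k+1) = [:0,1:] * stern (m+1)"
        using sternS_even[of "m+1"] stern_even[of "m+1"] k by (simp_all add: mult_2)
      show ?thesis
        unfolding S B e power_add power_one_right unfolding k stern_odd[OF \<open>m \<ge> 1\<close>] sternS_odd[OF \<open>m \<ge> 1\<close>]
        by (rule key_step_odd[OF IH])
    qed
  qed
qed

text \<open>B_n(1) is Stern's diatomic sequence, which is positive for n \<ge> 1.\<close>
lemma stern_at_1_pos: "n \<ge> 1 \<Longrightarrow> poly (stern n) 1 > 0"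
proof (induction n rule: less_induct)
  case (less n)
  show ?case
  proof (cases "n = 1")
    case True
    show ?thesis unfolding True stern_1 by simp
  next
    case False
    define m where "m = n div 2"
    have n_cases: "n = 2*m \<or> n = 2*m+1" and "m \<ge> 1"
      using less.prems False unfolding m_def by presburger+
    have pos_m: "poly (stern m) 1 > 0"
      using less.IH[of m] \<open>m \<ge> 1\<close> n_cases by auto
    from n_cases show ?thesis
    proof
      assume "n = 2*m"
      then show ?thesis
        using pos_m by (simp add: stern_even[OF \<open>m \<ge> 1\<close>])
    next
      assume n: "n = 2*m+1"
      have "poly (stern (m+1)) 1 > 0"
        using less.IH[of "m+1"] \<open>m \<ge> 1\<close> n by auto
      then show ?thesis
        using pos_m unfolding n stern_odd[OF \<open>m \<ge> 1\<close>] by simp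
    qed
  qed
qed

lemma stern_nonzero: "n \<ge> 1 \<Longrightarrow> stern n \<noteq> 0"
  using stern_at_1_pos[of n] by auto

lemma map_poly_of_int_add:
  "map_poly (of_int :: int \<Rightarrow> 'a::comm_ring_1) (p + q) = map_poly of_int p + map_poly of_int q"
  by (rule poly_eqI) (simp add: coeff_map_poly)

lemma map_poly_of_int_diff:
  "map_poly (of_int :: int \<Rightarrow> 'a::comm_ring_1) (p - q) = map_poly of_int p - map_poly of_int q"
  by (rule poly_eqI) (simp add: coeff_map_poly)

lemma map_poly_of_int_mult:
  "map_poly (of_int :: int \<Rightarrow> 'a::comm_ring_1) (p * q) = map_poly of_int p * map_poly of_int q"
  by (rule poly_eqI) (simp add: coeff_mult coeff_map_poly)

lemma toQt_add: "toQt (p + q) = toQt p + toQt q"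
  by (simp add: toQt_def map_poly_of_int_add)

lemma toQt_diff: "toQt (p - q) = toQt p - toQt q"
  by (simp add: toQt_def map_poly_of_int_diff)

lemma toQt_mult: "toQt (p * q) = toQt p * toQt q"
  by (simp add: toQt_def map_poly_of_int_mult)

lemma toQt_1: "toQt 1 = 1"
  by (simp add: toQt_def)

lemma toQt_2: "toQt 2 = 2"
  using toQt_add[of 1 1] by (simp add: toQt_1 one_add_one)

lemma toQt_power: "toQt (p ^ n) = toQt p ^ n"
  by (induction n) (simp_all add: toQt_1 toQt_mult)

lemma toQt_eq_0_iff: "toQt p = 0 \<longleftrightarrow> p = 0"
  by (simp add: toQt_def map_poly_eq_0_iff)

text \<open>The field identity behind the final step: with q = a + b and S' = s + s' + p,
  the difference of the two sides is the key identity divided by p a q.\<close>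
lemma key_identity_to_fractions:
  fixes t a b s s' p :: "'a::field"
  assumes "a \<noteq> 0" "a + b \<noteq> 0" "p \<noteq> 0"
    and key: "(2-t) * (s'*a - s*b) = p * (b - a + 1 - t)"
  shows "(2-t) / p * ((s + s' + p) / (a+b)) = (2-t) / p * (s/a) + (b - (t-1) * (a+1)) / (a * (a+b))"
proof -
  define q where "q = a + b"
  have "q \<noteq> 0"
    using assms(2) by (simp add: q_def)
  then have "(2-t) / p * ((s + s' + p) / q) - ((2-t) / p * (s/a) + ((q-a) - (t-1) * (a+1)) / (a * q))
      = ((2-t) * (s'*a - s*(q-a)) - p * ((q-a) - a + 1 - t)) / (p * a * q)"
    using assms(1,3) by (simp add: field_simps)
  then show ?thesis
    using key by (simp add: q_def)
qed

theorem mainTheorem14: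
  fixes k :: nat
  assumes "k \<ge> 1"
  defines "T \<equiv> toQt [:0, 1:]"
  defines "e \<equiv> nat \<lfloor>log 2 (real k)\<rfloor>"
  shows "(2 - T) / T ^ e * (toQt (sternS (2*k+1)) / toQt (stern (2*k+1)))
       = (2 - T) / T ^ e * (toQt (sternS k) / toQt (stern k))
         + (toQt (stern (k+1)) - (T - 1) * (toQt (stern k) + 1))
           / (toQt (stern k) * toQt (stern (2*k+1)))"
proof -
  have e: "e = flog2 k"
    by (simp add: e_def flog2_def)
  have key: "(2 - T) * (toQt (sternS (k+1)) * toQt (stern k) - toQt (sternS k) * toQt (stern (k+1)))
           = T ^ e * (toQt (stern (k+1)) - toQt (stern k) + 1 - T)"
    using arg_cong[OF stern_key_identity[OF assms(1)], of toQt]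
    by (simp add: toQt_mult toQt_add toQt_diff toQt_1 toQt_2 toQt_power T_def e)
  have B_odd: "toQt (stern (2*k+1)) = toQt (stern k) + toQt (stern (k+1))"
    unfolding stern_odd[OF assms(1)] toQt_add ..
  have S_odd: "toQt (sternS (2*k+1)) = toQt (sternS k) + toQt (sternS (k+1)) + T ^ e"
    unfolding sternS_odd[OF assms(1)] toQt_add toQt_power T_def e ..
  have "toQt (stern k) \<noteq> 0" "toQt (stern (2*k+1)) \<noteq> 0" "T ^ e \<noteq> 0"
    using stern_nonzero[OF assms(1)] stern_nonzero[of "2*k+1"]
    by (simp_all add: toQt_eq_0_iff T_def)
  then show ?thesis
    unfolding S_odd B_odd using key_identity_to_fractions[OF _ _ _ key] B_odd by simp
qed

end
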